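(* Consider Algorithm PDS-SPP described in the context, with nonnegative $\lambda_k,\tau_k$ and positive $\beta_k,p_k$, and suppose $$\tau_1=0,\quad \beta_k\tau_k\le\beta_{k-1}(\tau_{k-1}+1),\quad \beta_{k-1}=\beta_k\lambda_k,\quad \tilde L\lambda_k\le p_{k-1}\tau_k\quad\text{for all }k\ge2.$$ Let $$A=\sum_{k=1}^N\beta_k\Big[-\langle\hat x_k,y\rangle+\langle x,y_k\rangle+\langle y_k,\hat x_k-x\rangle-\tilde f^*(y_k)+\tilde f^*(y)+\frac{p_k}{T_k}\sum_{t=1}^{T_k}V(x_{k-1},x_k^t)\Big].$$ Then for all $(x,y)\in\mathcal X\times\mathcal Y$, $$A\ge-\beta_N\langle x_{N-1}-\hat x_N,y_N-y\rangle+\frac{\beta_Np_N}{2}\|x_{N-1}-\hat x_N\|^2+\beta_N(\tau_N+1)W(y_N,y).$$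
   Context: Setting. $\mathcal X$ closed convex subset of a finite-dimensional space with norm $\|\cdot\|$ (dual $\|\cdot\|_*$); $\mathcal Z$ closed convex with norm $|\cdot|$; $\mathcal A$ linear; $h$ convex on $\mathcal Z$; $\mu\ge0$; $\nu$ $1$-strongly convex on $\mathcal X$ w.r.t. $\|\cdot\|$; $\tilde f$ convex differentiable with $\nabla\tilde f$ $\tilde L$-Lipschitz w.r.t. $\|\cdot\|$; $\tilde f^*$ its conjugate, $\mathcal Y=\mathrm{dom}\,\tilde f^*$; $\zeta$ $1$-strongly convex on $\mathcal Z$ w.r.t. $|\cdot|$. $U,V,W$ are the Bregman functions of $\zeta,\nu,\tilde f^*$: e.g. $W(v,y)=\tilde f^*(y)-\tilde f^*(v)-\langle(\tilde f^* )'(v),y-v\rangle$. Algorithm PDS-SPP: $x_0\in\mathcal X$, $y_0\in\mathcal Y$, $z_0\in\mathcal Z$, $\hat x_0=x_{-1}=x_0$; for $k=1,\dots,N$: $\tilde x_k=x_{k-1}+\lambda_k(\hat x_{k-1}-x_{k-2})$, $y_k=\arg\min_{y\in\mathcal Y}\langle-\tilde x_k,y\rangle+\tilde f^*(y)+\tau_kW(y_{k-1},y)$; $x_k^0=x_{k-1}$, $z_k^0=z_{k-1}$, $x_k^{-1}=x_{k-1}^{T_{k-1}-1}$ ($x_1^{-1}=x_0$); for $t=1,\dots,T_k$: $\tilde u_k^t=x_k^{t-1}+\alpha_k^t(x_k^{t-1}-x_k^{t-2})$, $z_k^t=\arg\min_{z\in\mathcal Z}h(z)+\langle-\mathcal A\tilde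 u_k^t,z\rangle+q_k^tU(z_k^{t-1},z)$, $x_k^t=\arg\min_{x\in\mathcal X}\mu\nu(x)+\langle y_k+\mathcal A^\top z_k^t,x\rangle+\eta_k^tV(x_k^{t-1},x)+p_kV(x_{k-1},x)$; $x_k=x_k^{T_k}$, $z_k=z_k^{T_k}$, $\hat x_k=\frac1{T_k}\sum_tx_k^t$, $\hat z_k=\frac1{T_k}\sum_tz_k^t$. Here $T_k$ are positive integers and $q_k^t,\eta_k^t$ positive reals. *)

theory Defs
  imports "HOL-Analysis.Analysis"
begin

definition is_norm :: "('a::real_vector \<Rightarrow> real) \<Rightarrow> bool" where
  "is_norm n \<longleftrightarrow> (\<forall>x. n x \<ge> 0) \<and> (\<forall>x. n x = 0 \<longleftrightarrow> x = 0)
     \<and> (\<forall>c x. n (c *\<^sub>R x) = \<bar>c\<bar> * n x) \<and> (\<forall>x y. n (x + y) \<le> n x + n y)"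

text \<open>Dual norm (dual space identified with the space via the inner product).\<close>
definition dual_norm :: "('a::real_inner \<Rightarrow> real) \<Rightarrow> 'a \<Rightarrow> real" where
  "dual_norm n g = Sup {inner g x | x. n x \<le> 1}"

definition strongly_convex_wrt ::
  "'a::real_vector set \<Rightarrow> ('a \<Rightarrow> real) \<Rightarrow> ('a \<Rightarrow> real) \<Rightarrow> real \<Rightarrow> bool" where
  "strongly_convex_wrt S n \<phi> m \<longleftrightarrow> (\<forall>x\<in>S. \<forall>y\<in>S. \<forall>t. 0 \<le> t \<and> t \<le> 1 \<longrightarrow>
      \<phi> ((1 - t) *\<^sub>R x + t *\<^sub>R y) \<le> (1 - t) * \<phi> x + t * \<phi> y - m / 2 * t * (1 - t) * (n (x - y))\<^sup>2)"

definition fconj :: "('a::real_inner \<Rightarrow> real) \<Rightarrow> 'a \<Rightarrow> ereal" where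
  "fconj f y = (SUP x. ereal (inner x y - f x))"

definition fdom :: "('a::real_inner \<Rightarrow> real) \<Rightarrow> 'a set" where
  "fdom f = {y. fconj f y < \<infinity>}"

definition fstar :: "('a::real_inner \<Rightarrow> real) \<Rightarrow> 'a \<Rightarrow> real" where
  "fstar f y = real_of_ereal (fconj f y)"

definition is_subgrad :: "('a::real_inner \<Rightarrow> real) \<Rightarrow> 'a set \<Rightarrow> 'a \<Rightarrow> 'a \<Rightarrow> bool" where
  "is_subgrad \<phi> S v g \<longleftrightarrow> v \<in> S \<and> (\<forall>y\<in>S. \<phi> y \<ge> \<phi> v + inner g (y - v))"

definition bregman :: "('a::real_inner \<Rightarrow> real) \<Rightarrow> 'a \<Rightarrow> 'a \<Rightarrow> 'a \<Rightarrow> real" where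
  "bregman \<phi> g v y = \<phi> y - \<phi> v - inner g (y - v)"

end

theory Submission imports Defs begin

(* The y-update is a Bregman proximal step for f*, so its three-point identity turns the k-th
   summand into <x_hat_k - x_tilde_k, y_k - y> plus Bregman distances of f*, and strong convexity of nu
   bounds the averaged proximity term below by p_k/2 ||x_{k-1} - x_hat_k||^2.  Because grad f is
   L-Lipschitz, f* is 1/L-strongly convex; under L lam_k <= p_{k-1} tau_k this lets
   beta_k tau_k D_{f*}(y_{k-1}, y_k) absorb the extrapolation error
   beta_{k-1} <x_hat_{k-1} - x_{k-2}, y_k - y_{k-1}> against the quadratic term of step k-1.
   The conditions on beta then make the lower bounds telescope to the last step. *)

lemma is_norm_nonneg: "is_norm n \<Longrightarrow> 0 \<le> n x"
  unfolding is_norm_def by blast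

lemma is_norm_eq_0_iff: "is_norm n \<Longrightarrow> n x = 0 \<longleftrightarrow> x = 0"
  unfolding is_norm_def by blast

lemma is_norm_scaleR: "is_norm n \<Longrightarrow> n (c *\<^sub>R x) = \<bar>c\<bar> * n x"
  unfolding is_norm_def by blast

lemma is_norm_triangle: "is_norm n \<Longrightarrow> n (x + y) \<le> n x + n y"
  unfolding is_norm_def by blast

lemma is_norm_zero: "is_norm n \<Longrightarrow> n 0 = 0"
  by (simp add: is_norm_eq_0_iff)

lemma is_norm_pos: "is_norm n \<Longrightarrow> x \<noteq> 0 \<Longrightarrow> 0 < n x"
  using is_norm_nonneg is_norm_eq_0_iff by (metis less_eq_real_def)

lemma is_norm_minus_commute: "is_norm n \<Longrightarrow> n (x - y) = n (y - x)"
  using is_norm_scaleR[of n "-1" "x - y"] by simp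

lemma is_norm_sum_le: "is_norm n \<Longrightarrow> n (sum u I) \<le> (\<Sum>i\<in>I. n (u i))"
proof (induction I rule: infinite_finite_induct)
  case (insert i F)
  then show ?case using is_norm_triangle[of n "u i" "sum u F"] by simp
qed (simp_all add: is_norm_zero)

lemma convex_on_is_norm: "is_norm n \<Longrightarrow> convex_on UNIV n"
proof (rule convex_onI)
  fix t :: real and x y assume n: "is_norm n" and t: "0 < t" "t < 1"
  have "n ((1 - t) *\<^sub>R x + t *\<^sub>R y) \<le> n ((1 - t) *\<^sub>R x) + n (t *\<^sub>R y)"
    using n by (rule is_norm_triangle)
  also have "\<dots> = (1 - t) * n x + t * n y"
    using t by (simp add: is_norm_scaleR[OF n])
  finally show "n ((1 - t) *\<^sub>R x + t *\<^sub>R y) \<le> (1 - t) * n x + t * n y" .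
qed simp

text \<open>By continuity, \<open>n\<close> attains a positive minimum on the Euclidean unit sphere.\<close>
lemma is_norm_ge_norm:
  fixes n :: "'a::euclidean_space \<Rightarrow> real"
  assumes n: "is_norm n"
  obtains c where "0 < c" "\<And>x. c * norm x \<le> n x"
proof -
  have cont: "continuous_on (sphere 0 1) n"
    using convex_on_continuous[OF open_UNIV convex_on_is_norm[OF n]] continuous_on_subset by blast
  obtain b :: 'a where "b \<in> Basis" using nonempty_Basis by blast
  then have "sphere (0::'a) 1 \<noteq> {}" by (metis norm_Basis mem_sphere_0 empty_iff)
  then obtain x0 where x0: "x0 \<in> sphere 0 1" "\<And>x. x \<in> sphere 0 1 \<Longrightarrow> n x0 \<le> n x"
    using continuous_attains_inf[OF compact_sphere _ cont] by blast
  have "n x0 * norm x \<le> n x" for x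
  proof (cases "x = 0")
    case False
    then have "n x0 \<le> n ((1 / norm x) *\<^sub>R x)" by (intro x0(2)) simp
    also have "\<dots> = n x / norm x" by (simp add: is_norm_scaleR[OF n])
    finally show ?thesis using False by (simp add: field_simps)
  qed (simp add: is_norm_zero[OF n])
  moreover have "0 < n x0" using x0(1) by (intro is_norm_pos[OF n]) auto
  ultimately show thesis using that by blast
qed

lemma inner_le_dual_norm:
  fixes n :: "'a::euclidean_space \<Rightarrow> real"
  assumes n: "is_norm n"
  shows "inner g x \<le> dual_norm n g * n x"
proof (cases "x = 0")
  case False
  obtain c where c: "0 < c" "\<And>x. c * norm x \<le> n x" using is_norm_ge_norm[OF n] by blast
  have bdd: "bdd_above {inner g x | x. n x \<le> 1}"
  proof (rule bdd_aboveI)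
    fix r assume "r \<in> {inner g x | x. n x \<le> 1}"
    then obtain x where x: "r = inner g x" "n x \<le> 1" by blast
    have "norm x \<le> 1 / c" using c x(2) order_trans[OF c(2)] by (simp add: field_simps)
    then have "norm g * norm x \<le> norm g / c"
      using mult_left_mono[OF _ norm_ge_zero, of "norm x" "1 / c" g] by simp
    then show "r \<le> norm g / c" using x(1) norm_cauchy_schwarz[of g x] by simp
  qed
  have nx: "0 < n x" using False by (rule is_norm_pos[OF n])
  have "n ((1 / n x) *\<^sub>R x) = 1" using nx by (simp add: is_norm_scaleR[OF n])
  then have "inner g ((1 / n x) *\<^sub>R x) \<le> dual_norm n g"
    unfolding dual_norm_def by (intro cSup_upper[OF _ bdd]) fastforce
  then show ?thesis using nx by (simp add: field_simps)
qed (simp add: is_norm_zero[OF n])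

lemma is_norm_average_sq_le:
  assumes n: "is_norm n" and I: "finite I" "I \<noteq> {}"
  shows "(n ((1 / card I) *\<^sub>R (\<Sum>i\<in>I. u i)))\<^sup>2 \<le> (\<Sum>i\<in>I. (n (u i))\<^sup>2) / card I"
proof -
  have c: "0 < real (card I)" using I by (simp add: card_gt_0_iff)
  have "n ((1 / card I) *\<^sub>R (\<Sum>i\<in>I. u i)) \<le> (\<Sum>i\<in>I. n (u i)) / card I"
    using is_norm_sum_le[OF n, of u I] c by (simp add: is_norm_scaleR[OF n] divide_right_mono)
  then have "(n ((1 / card I) *\<^sub>R (\<Sum>i\<in>I. u i)))\<^sup>2 \<le> ((\<Sum>i\<in>I. n (u i)) / card I)\<^sup>2"
    by (simp add: power_mono is_norm_nonneg[OF n])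
  also have "\<dots> \<le> (\<Sum>i\<in>I. (n (u i))\<^sup>2) * card I / (real (card I))\<^sup>2"
    unfolding power_divide by (intro divide_right_mono sum_squared_le_sum_of_squares) simp
  also have "\<dots> = (\<Sum>i\<in>I. (n (u i))\<^sup>2) / card I"
    using c by (simp add: power2_eq_square)
  finally show ?thesis .
qed

lemma has_real_derivative_along_line:
  assumes "(f has_derivative D) (at (a + t *\<^sub>R u))"
  shows "((\<lambda>s. f (a + s *\<^sub>R u)) has_real_derivative D u) (at t)"
proof -
  interpret D: bounded_linear D using assms by (rule has_derivative_bounded_linear)
  have "((\<lambda>s. a + s *\<^sub>R u) has_derivative (\<lambda>s. s *\<^sub>R u)) (at t)"
    by (auto intro!: derivative_eq_intros)
  from diff_chain_at[OF this assms]
  have "((\<lambda>s. f (a + s *\<^sub>R u)) has_derivative (\<lambda>s. D u * s)) (at t)"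
    by (simp add: o_def D.scaleR mult.commute)
  then show ?thesis by (simp add: has_field_derivative_def)
qed

lemma convex_on_ge_tangent:
  fixes f :: "'a::real_normed_vector \<Rightarrow> real"
  assumes f: "convex_on UNIV f" and D: "(f has_derivative D) (at z)"
  shows "f z + D (x - z) \<le> f x"
proof -
  define g where "g t = f (z + t *\<^sub>R (x - z))" for t :: real
  have "convex_on UNIV g"
  proof (rule convex_onI)
    fix t s r :: real assume t: "0 < t" "t < 1"
    have "z + ((1 - t) * s + t * r) *\<^sub>R (x - z)
        = (1 - t) *\<^sub>R (z + s *\<^sub>R (x - z)) + t *\<^sub>R (z + r *\<^sub>R (x - z))"
      by (simp add: algebra_simps)
    then show "g ((1 - t) *\<^sub>R s + t *\<^sub>R r) \<le> (1 - t) * g s + t * g r"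
      using convex_onD[OF f, of t] t unfolding g_def by simp
  qed simp
  moreover have "(g has_real_derivative D (x - z)) (at 0)"
    unfolding g_def using D by (intro has_real_derivative_along_line) simp
  ultimately have "D (x - z) * (1 - 0) \<le> g 1 - g 0"
    by (intro convex_on_imp_above_tangent[where A = UNIV]) auto
  then show ?thesis by (simp add: g_def)
qed

lemma lipschitz_gradient_upper_bound:
  fixes f :: "'a::euclidean_space \<Rightarrow> real"
  assumes n: "is_norm n"
    and f: "\<And>u. (f has_derivative (\<lambda>d. inner (gf u) d)) (at u)"
    and lip: "\<And>u v. dual_norm n (gf u - gf v) \<le> L * n (u - v)" and L: "0 \<le> L"
  shows "f (a + u) \<le> f a + inner (gf a) u + L / 2 * (n u)\<^sup>2"
proof -
  define \<psi> where "\<psi> t = f (a + t *\<^sub>R u) - t * inner (gf a) u - L / 2 * t\<^sup>2 * (n u)\<^sup>2" for t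
  have "\<psi> 1 \<le> \<psi> 0"
  proof (rule DERIV_nonpos_imp_nonincreasing[of 0 1 \<psi>])
    fix t :: real assume t: "0 \<le> t" "t \<le> 1"
    have "(\<psi> has_real_derivative inner (gf (a + t *\<^sub>R u)) u - inner (gf a) u - L * t * (n u)\<^sup>2) (at t)"
      unfolding \<psi>_def
      by (rule derivative_eq_intros has_real_derivative_along_line[OF f] refl | simp)+
    moreover have "inner (gf (a + t *\<^sub>R u)) u - inner (gf a) u \<le> L * t * (n u)\<^sup>2"
    proof -
      have "inner (gf (a + t *\<^sub>R u)) u - inner (gf a) u \<le> dual_norm n (gf (a + t *\<^sub>R u) - gf a) * n u"
        using inner_le_dual_norm[OF n, of "gf (a + t *\<^sub>R u) - gf a" u] by (simp add: inner_diff_left)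
      also have "\<dots> \<le> L * n (t *\<^sub>R u) * n u"
        using lip[of "a + t *\<^sub>R u" a] by (simp add: mult_right_mono is_norm_nonneg[OF n])
      finally show ?thesis using t by (simp add: is_norm_scaleR[OF n] power2_eq_square)
    qed
    ultimately show "\<exists>y. (\<psi> has_real_derivative y) (at t) \<and> y \<le> 0" by force
  qed simp
  then show ?thesis by (simp add: \<psi>_def)
qed

lemma fconj_ge: "ereal (inner z y - f z) \<le> fconj f y"
  unfolding fconj_def by (rule SUP_upper) simp

lemma fconj_eq_fstar: "y \<in> fdom f \<Longrightarrow> fconj f y = ereal (fstar f y)"
  using fconj_ge[of 0 y f] unfolding fdom_def fstar_def by (cases "fconj f y") auto

lemma fenchel_young: "y \<in> fdom f \<Longrightarrow> inner z y - f z \<le> fstar f y"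
  using fconj_ge[of z y f] by (simp add: fconj_eq_fstar)

lemma fstar_gradient:
  assumes f: "convex_on UNIV f" and gf: "\<And>u. (f has_derivative (\<lambda>d. inner (gf u) d)) (at u)"
  shows "gf z \<in> fdom f" and "fstar f (gf z) = inner z (gf z) - f z"
proof -
  have "fconj f (gf z) \<le> ereal (inner z (gf z) - f z)"
    unfolding fconj_def
  proof (rule SUP_least)
    fix x
    have "f z + inner (gf z) (x - z) \<le> f x" by (rule convex_on_ge_tangent[OF f gf])
    then show "ereal (inner x (gf z) - f x) \<le> ereal (inner z (gf z) - f z)"
      by (simp add: inner_diff_right inner_commute)
  qed
  then have "fconj f (gf z) = ereal (inner z (gf z) - f z)"
    by (intro antisym fconj_ge)
  then show "gf z \<in> fdom f" "fstar f (gf z) = inner z (gf z) - f z"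
    unfolding fdom_def fstar_def by auto
qed

text \<open>A subgradient \<open>g\<close> of \<open>f\<^sup>*\<close> at \<open>v\<close> maximises \<open>\<langle>z, v\<rangle> - f z\<close>, so \<open>\<nabla>f g = v\<close>.\<close>
lemma subgrad_fstar_imp_gradient:
  assumes f: "convex_on UNIV f" and gf: "\<And>u. (f has_derivative (\<lambda>d. inner (gf u) d)) (at u)"
    and g: "is_subgrad (fstar f) (fdom f) v g"
  shows "gf g = v" and "fstar f v = inner g v - f g"
proof -
  have v: "v \<in> fdom f" using g unfolding is_subgrad_def by blast
  have "fstar f v + inner g (gf g - v) \<le> fstar f (gf g)"
    using g fstar_gradient(1)[OF f gf] unfolding is_subgrad_def by blast
  then have "fstar f v \<le> inner g v - f g"
    by (simp add: fstar_gradient(2)[OF f gf] inner_diff_right inner_commute)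
  then show fstar_v: "fstar f v = inner g v - f g"
    using fenchel_young[OF v, of g] by linarith
  have "(\<lambda>d. inner (gf g) d - inner v d) = (\<lambda>d. 0)"
  proof (rule has_derivative_local_min)
    show "((\<lambda>z. f z - inner v z) has_derivative (\<lambda>d. inner (gf g) d - inner v d)) (at g)"
      using gf[of g] by (auto intro!: derivative_eq_intros)
    show "\<forall>\<^sub>F z in at g. f g - inner v g \<le> f z - inner v z"
    proof (intro always_eventually allI)
      fix z
      show "f g - inner v g \<le> f z - inner v z"
        using fenchel_young[OF v, of z] fstar_v inner_commute[of v z] inner_commute[of v g] by linarith
    qed
  qed
  then have "inner (gf g - v) (gf g - v) = 0"
    by (metis inner_diff_left right_minus_eq)
  then show "gf g = v" by simp
qed

text \<open>The conjugate of an \<open>L\<close>-smooth function is \<open>1/L\<close>-strongly convex, in the form of a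
  quadratic minorant of its Bregman distance; it is obtained by testing the Fenchel--Young
  inequality at \<open>g + u\<close>.\<close>
lemma bregman_fstar_ge:
  fixes f :: "'a::euclidean_space \<Rightarrow> real"
  assumes n: "is_norm n" and f: "convex_on UNIV f"
    and gf: "\<And>u. (f has_derivative (\<lambda>d. inner (gf u) d)) (at u)"
    and lip: "\<And>u v. dual_norm n (gf u - gf v) \<le> L * n (u - v)" and L: "0 \<le> L"
    and g: "is_subgrad (fstar f) (fdom f) v g" and w: "w \<in> fdom f"
  shows "inner u (w - v) - L / 2 * (n u)\<^sup>2 \<le> bregman (fstar f) g v w"
proof -
  have "inner (g + u) w - f (g + u) \<le> fstar f w" by (rule fenchel_young[OF w])
  moreover have "f (g + u) \<le> f g + inner v u + L / 2 * (n u)\<^sup>2"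
    using lipschitz_gradient_upper_bound[OF n gf lip L, of g u]
    by (simp add: subgrad_fstar_imp_gradient(1)[OF f gf g])
  ultimately show ?thesis
    unfolding bregman_def subgrad_fstar_imp_gradient(2)[OF f gf g]
    by (simp add: inner_add_left inner_add_right inner_diff_right inner_commute)
qed

text \<open>The previous bound at \<open>(lam / \<tau>) *\<^sub>R u\<close>, as the step-size condition \<open>L * lam \<le> p * \<tau>\<close>
  allows. For \<open>\<tau> = 0\<close> the condition forces \<open>L = 0\<close>, and the minorant then
  being unbounded in \<open>u\<close> forces \<open>\<langle>u, w - v\<rangle> \<le> 0\<close>.\<close>
lemma bregman_fstar_scaled_ge:
  fixes f :: "'a::euclidean_space \<Rightarrow> real"
  assumes n: "is_norm n" and f: "convex_on UNIV f"
    and gf: "\<And>u. (f has_derivative (\<lambda>d. inner (gf u) d)) (at u)"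
    and lip: "\<And>u v. dual_norm n (gf u - gf v) \<le> L * n (u - v)" and L: "0 \<le> L"
    and g: "is_subgrad (fstar f) (fdom f) v g" and w: "w \<in> fdom f"
    and lam: "0 < lam" and \<tau>: "0 \<le> \<tau>" and p: "0 \<le> p" and step: "L * lam \<le> p * \<tau>"
  shows "lam * inner u (w - v) - lam * p / 2 * (n u)\<^sup>2 \<le> \<tau> * bregman (fstar f) g v w"
proof -
  define B where "B = bregman (fstar f) g v w"
  define d where "d = inner u (w - v)"
  have scaled: "s * d - L / 2 * s\<^sup>2 * (n u)\<^sup>2 \<le> B" if "0 \<le> s" for s
    using bregman_fstar_ge[OF n f gf lip L g w, of "s *\<^sub>R u"] that
    by (simp add: B_def d_def is_norm_scaleR[OF n] power_mult_distrib)
  show ?thesis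
  proof (cases "\<tau> = 0")
    case True
    then have "L = 0" using step lam L by (simp add: mult_le_0_iff)
    have "d \<le> 0"
    proof (rule ccontr)
      assume "\<not> d \<le> 0"
      then have "(\<bar>B\<bar> + 1) / d * d \<le> B" using scaled[of "(\<bar>B\<bar> + 1) / d"] \<open>L = 0\<close> by simp
      with \<open>\<not> d \<le> 0\<close> show False by simp
    qed
    then have "lam * d \<le> 0" using lam by (simp add: mult_nonneg_nonpos)
    moreover have "0 \<le> lam * p / 2 * (n u)\<^sup>2" using lam p by simp
    ultimately show ?thesis using True unfolding d_def by simp
  next
    case False
    with \<tau> have \<tau>: "0 < \<tau>" by simp
    have "\<tau> * (lam / \<tau> * d - L / 2 * (lam / \<tau>)\<^sup>2 * (n u)\<^sup>2) \<le> \<tau> * B"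
      using scaled[of "lam / \<tau>"] lam \<tau> by (intro mult_left_mono) auto
    moreover have "\<tau> * (lam / \<tau> * d - L / 2 * (lam / \<tau>)\<^sup>2 * (n u)\<^sup>2)
        = lam * d - L * lam * lam / (2 * \<tau>) * (n u)\<^sup>2"
      using \<tau> by (simp add: field_simps power2_eq_square)
    ultimately have "lam * d - L * lam * lam / (2 * \<tau>) * (n u)\<^sup>2 \<le> \<tau> * B" by simp
    moreover have "L * lam * lam / (2 * \<tau>) * (n u)\<^sup>2 \<le> p * \<tau> * lam / (2 * \<tau>) * (n u)\<^sup>2"
      using step lam \<tau> by (intro mult_right_mono divide_right_mono mult_right_mono) auto
    moreover have "p * \<tau> * lam / (2 * \<tau>) * (n u)\<^sup>2 = lam * p / 2 * (n u)\<^sup>2"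
      using \<tau> by simp
    ultimately show ?thesis unfolding B_def d_def by linarith
  qed
qed

lemma bregman_ge_of_strongly_convex:
  assumes \<phi>: "strongly_convex_wrt S n \<phi> 1" and S: "convex S"
    and g: "is_subgrad \<phi> S x g" and y: "y \<in> S"
  shows "1 / 2 * (n (x - y))\<^sup>2 \<le> bregman \<phi> g x y"
proof -
  define m where "m = (n (x - y))\<^sup>2"
  have x: "x \<in> S" using g unfolding is_subgrad_def by blast
  have bound: "(1 - t) / 2 * m \<le> bregman \<phi> g x y" if t: "0 < t" "t \<le> 1" for t
  proof -
    have "(1 - t) *\<^sub>R x + t *\<^sub>R y \<in> S" using S x y t by (simp add: convexD)
    then have "\<phi> x + inner g ((1 - t) *\<^sub>R x + t *\<^sub>R y - x) \<le> \<phi> ((1 - t) *\<^sub>R x + t *\<^sub>R y)"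
      using g unfolding is_subgrad_def by blast
    moreover have "(1 - t) *\<^sub>R x + t *\<^sub>R y - x = t *\<^sub>R (y - x)" by (simp add: algebra_simps)
    ultimately have "\<phi> x + inner g (t *\<^sub>R (y - x)) \<le> \<phi> ((1 - t) *\<^sub>R x + t *\<^sub>R y)" by simp
    also have "\<dots> \<le> (1 - t) * \<phi> x + t * \<phi> y - 1 / 2 * t * (1 - t) * m"
      using \<phi> x y t unfolding strongly_convex_wrt_def m_def by simp
    finally have "t * ((1 - t) / 2 * m) \<le> t * bregman \<phi> g x y"
      unfolding bregman_def by (simp add: algebra_simps)
    then show ?thesis using t by simp
  qed
  show ?thesis
  proof (cases "m = 0")
    case False
    then have "0 < m" by (simp add: m_def)
    have "m / 2 \<le> bregman \<phi> g x y"
    proof (rule dense_le_bounded[of 0])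
      fix r assume r: "0 < r" "r < m / 2"
      with bound[of "1 - 2 * r / m"] \<open>0 < m\<close> show "r \<le> bregman \<phi> g x y"
        by (simp add: field_simps)
    qed (use \<open>0 < m\<close> in simp)
    then show ?thesis by (simp add: m_def)
  qed (use bound[of 1] m_def in simp)
qed

lemma bregman_average_ge:
  assumes \<phi>: "strongly_convex_wrt S n \<phi> 1" and S: "convex S" and n: "is_norm n"
    and g: "is_subgrad \<phi> S x g" and I: "finite I" "I \<noteq> {}" and z: "\<And>i. i \<in> I \<Longrightarrow> z i \<in> S"
  shows "1 / 2 * (n (x - (1 / card I) *\<^sub>R (\<Sum>i\<in>I. z i)))\<^sup>2 \<le> (\<Sum>i\<in>I. bregman \<phi> g x (z i)) / card I"
proof -
  have "x - (1 / card I) *\<^sub>R (\<Sum>i\<in>I. z i) = (1 / card I) *\<^sub>R (\<Sum>i\<in>I. x - z i)"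
    using I by (simp add: sum_subtractf scaleR_diff_right sum_constant_scaleR)
  then have "(n (x - (1 / card I) *\<^sub>R (\<Sum>i\<in>I. z i)))\<^sup>2 \<le> (\<Sum>i\<in>I. (n (x - z i))\<^sup>2) / card I"
    using is_norm_average_sq_le[OF n I] by simp
  also have "\<dots> \<le> (\<Sum>i\<in>I. 2 * bregman \<phi> g x (z i)) / card I"
    using bregman_ge_of_strongly_convex[OF \<phi> S g z]
    by (intro divide_right_mono sum_mono) fastforce+
  finally show ?thesis by (simp add: sum_distrib_left[symmetric] mult.commute)
qed

lemma bregman_prox_identity:
  assumes "(1 + \<tau>) *\<^sub>R g' = c + \<tau> *\<^sub>R g"
  shows "- inner c y' + \<phi> y' + \<tau> * bregman \<phi> g y0 y' + (1 + \<tau>) * bregman \<phi> g' y' v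
    = - inner c v + \<phi> v + \<tau> * bregman \<phi> g y0 v"
proof -
  have "(1 + \<tau>) * inner g' (v - y') = inner c (v - y') + \<tau> * inner g (v - y')"
    using arg_cong[OF assms, of "\<lambda>a. inner a (v - y')"] by (simp add: inner_add_left)
  then show ?thesis
    unfolding bregman_def by (simp add: algebra_simps inner_diff_right)
qed

lemma is_arg_min_prox_imp_subgrad:
  assumes min: "is_arg_min (\<lambda>v. - inner c v + \<phi> v + \<tau> * bregman \<phi> g y0 v) (\<lambda>v. v \<in> S) y'"
    and g': "(1 + \<tau>) *\<^sub>R g' = c + \<tau> *\<^sub>R g" and \<tau>: "0 \<le> \<tau>"
  shows "is_subgrad \<phi> S y' g'"
  unfolding is_subgrad_def
proof (intro conjI ballI)
  show "y' \<in> S" using min unfolding is_arg_min_def by blast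
  fix v assume "v \<in> S"
  then have "\<not> - inner c v + \<phi> v + \<tau> * bregman \<phi> g y0 v < - inner c y' + \<phi> y' + \<tau> * bregman \<phi> g y0 y'"
    using min unfolding is_arg_min_def by blast
  then have "0 \<le> (1 + \<tau>) * bregman \<phi> g' y' v"
    using bregman_prox_identity[OF g', of y' \<phi> y0 v] by linarith
  then show "\<phi> y' + inner g' (v - y') \<le> \<phi> v"
    using \<tau> by (simp add: zero_le_mult_iff bregman_def)
qed

lemma sum_ge_telescoping:
  fixes a R :: "nat \<Rightarrow> 'a::ordered_ab_group_add"
  assumes "R 1 \<le> a 1" and "\<And>k. 2 \<le> k \<Longrightarrow> k \<le> N \<Longrightarrow> R k - R (k - 1) \<le> a k" and "1 \<le> N"
  shows "R N \<le> (\<Sum>k = 1..N. a k)"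
  using assms(3,2)
proof (induction N rule: nat_induct_at_least)
  case (Suc N)
  have "R (Suc N) - R N \<le> a (Suc N)" using Suc.prems[of "Suc N"] Suc.hyps by simp
  moreover have "R N \<le> (\<Sum>k = 1..N. a k)" using Suc.IH Suc.prems by simp
  ultimately have "(R (Suc N) - R N) + R N \<le> a (Suc N) + (\<Sum>k = 1..N. a k)" by (rule add_mono)
  then show ?case using Suc.hyps by (simp add: add.commute)
qed (use assms(1) in simp)

text \<open>Only the dual updates matter for the bound: the inner primal-dual loop enters solely
  through \<open>xin k t \<in> Xs\<close>.\<close>
locale pds_spp_dual_iterates =
  fixes nX :: "'a::euclidean_space \<Rightarrow> real" and Xs :: "'a set" and \<nu> :: "'a \<Rightarrow> real"
    and f :: "'a \<Rightarrow> real" and gf :: "'a \<Rightarrow> 'a" and L :: real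
    and lam \<tau> \<beta> p :: "nat \<Rightarrow> real" and T :: "nat \<Rightarrow> nat" and N :: nat
    and xs xh xt ys gy gxo :: "nat \<Rightarrow> 'a" and xin :: "nat \<Rightarrow> nat \<Rightarrow> 'a"
  assumes nX: "is_norm nX" and Xs: "convex Xs" and nu: "strongly_convex_wrt Xs nX \<nu> 1"
    and f_convex: "convex_on UNIV f"
    and f_grad: "\<And>u. (f has_derivative (\<lambda>d. inner (gf u) d)) (at u)"
    and L: "L \<ge> 0" and f_lip: "\<And>u v. dual_norm nX (gf u - gf v) \<le> L * nX (u - v)"
    and tau_nn: "\<And>k. \<tau> k \<ge> 0" and beta_pos: "\<And>k. \<beta> k > 0" and p_pos: "\<And>k. p k > 0"
    and T_pos: "\<And>k. T k > 0" and tau1: "\<tau> 1 = 0"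
    and c1: "\<And>k. 2 \<le> k \<Longrightarrow> k \<le> N \<Longrightarrow> \<beta> k * \<tau> k \<le> \<beta> (k - 1) * (\<tau> (k - 1) + 1)"
    and c2: "\<And>k. 2 \<le> k \<Longrightarrow> k \<le> N \<Longrightarrow> \<beta> (k - 1) = \<beta> k * lam k"
    and c3: "\<And>k. 2 \<le> k \<Longrightarrow> k \<le> N \<Longrightarrow> L * lam k \<le> p (k - 1) * \<tau> k"
    and xh0: "xh 0 = xs 0"
    and gy0: "is_subgrad (fstar f) (fdom f) (ys 0) (gy 0)"
    and xt_def: "\<And>k. 1 \<le> k \<Longrightarrow> k \<le> N \<Longrightarrow>
        xt k = xs (k - 1) + lam k *\<^sub>R (xh (k - 1) - xs (k - 2))"
    and y_step: "\<And>k. 1 \<le> k \<Longrightarrow> k \<le> N \<Longrightarrow>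
        is_arg_min (\<lambda>v. - inner (xt k) v + fstar f v + \<tau> k * bregman (fstar f) (gy (k - 1)) (ys (k - 1)) v)
          (\<lambda>v. v \<in> fdom f) (ys k)"
    and gy_step: "\<And>k. 1 \<le> k \<Longrightarrow> k \<le> N \<Longrightarrow>
        gy k = (1 / (1 + \<tau> k)) *\<^sub>R (xt k + \<tau> k *\<^sub>R gy (k - 1))"
    and gxo: "\<And>k. 1 \<le> k \<Longrightarrow> k \<le> N \<Longrightarrow> is_subgrad \<nu> Xs (xs (k - 1)) (gxo k)"
    and xin_in: "\<And>k t. 1 \<le> k \<Longrightarrow> k \<le> N \<Longrightarrow> 1 \<le> t \<Longrightarrow> t \<le> T k \<Longrightarrow> xin k t \<in> Xs"
    and xh_def: "\<And>k. 1 \<le> k \<Longrightarrow> k \<le> N \<Longrightarrow> xh k = (1 / real (T k)) *\<^sub>R (\<Sum>t = 1..T k. xin k t)"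
begin

abbreviation W :: "nat \<Rightarrow> 'a \<Rightarrow> real" where
  "W k \<equiv> bregman (fstar f) (gy k) (ys k)"

definition proximity :: "nat \<Rightarrow> real" where
  "proximity k = p k / real (T k) * (\<Sum>t = 1..T k. bregman \<nu> (gxo k) (xs (k - 1)) (xin k t))"

definition gap :: "nat \<Rightarrow> 'a \<Rightarrow> 'a \<Rightarrow> real" where
  "gap k x y = - inner (xh k) y + inner x (ys k) + inner (ys k) (xh k - x)
     - fstar f (ys k) + fstar f y + proximity k"

definition potential :: "nat \<Rightarrow> 'a \<Rightarrow> real" where
  "potential k y = - \<beta> k * inner (xs (k - 1) - xh k) (ys k - y)
     + \<beta> k * p k / 2 * (nX (xs (k - 1) - xh k))\<^sup>2 + \<beta> k * (\<tau> k + 1) * W k y"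

lemma gy_step_scaled:
  "1 \<le> k \<Longrightarrow> k \<le> N \<Longrightarrow> (1 + \<tau> k) *\<^sub>R gy k = xt k + \<tau> k *\<^sub>R gy (k - 1)"
  using gy_step tau_nn[of k] by (simp add: add_nonneg_eq_0_iff)

lemma ys_subgrad: "k \<le> N \<Longrightarrow> is_subgrad (fstar f) (fdom f) (ys k) (gy k)"
proof (cases "k = 0")
  case False
  moreover assume "k \<le> N"
  ultimately have k: "1 \<le> k" "k \<le> N" by auto
  show ?thesis
    by (rule is_arg_min_prox_imp_subgrad[OF y_step[OF k] gy_step_scaled[OF k] tau_nn])
qed (use gy0 in simp)

lemma W_nonneg: "k \<le> N \<Longrightarrow> v \<in> fdom f \<Longrightarrow> 0 \<le> W k v"
  using ys_subgrad unfolding is_subgrad_def bregman_def by fastforce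

lemma gap_eq:
  assumes "1 \<le> k" "k \<le> N"
  shows "gap k x y = inner (xh k - xt k) (ys k - y) + \<tau> k * W (k - 1) (ys k) + (1 + \<tau> k) * W k y
    - \<tau> k * W (k - 1) y + proximity k"
  using bregman_prox_identity[OF gy_step_scaled[OF assms], of "ys k" "fstar f" "ys (k - 1)" y]
  unfolding gap_def by (simp add: inner_diff_left inner_diff_right inner_commute algebra_simps)

lemma proximity_ge:
  assumes k: "1 \<le> k" "k \<le> N"
  shows "p k / 2 * (nX (xs (k - 1) - xh k))\<^sup>2 \<le> proximity k"
proof -
  have "1 / 2 * (nX (xs (k - 1) - xh k))\<^sup>2
      \<le> (\<Sum>t = 1..T k. bregman \<nu> (gxo k) (xs (k - 1)) (xin k t)) / T k"
    using bregman_average_ge[OF nu Xs nX gxo[OF k], of "{1..T k}" "xin k"] T_pos[of k]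
    by (simp add: xh_def[OF k] xin_in[OF k])
  from mult_left_mono[OF this, of "p k"] show ?thesis
    using p_pos[of k] unfolding proximity_def by simp
qed

lemma potential_first:
  assumes "1 \<le> N"
  shows "potential 1 y \<le> \<beta> 1 * gap 1 x y"
proof -
  have "xt 1 = xs 0" using xt_def[of 1] xh0 assms by simp
  then have gap: "gap 1 x y = inner (xh 1 - xs 0) (ys 1 - y) + W 1 y + proximity 1"
    using gap_eq[of 1] tau1 assms by simp
  have "\<beta> 1 * (p 1 / 2 * (nX (xs 0 - xh 1))\<^sup>2) \<le> \<beta> 1 * proximity 1"
    using proximity_ge[of 1] assms beta_pos[of 1] by (intro mult_left_mono) auto
  then show ?thesis
    unfolding potential_def gap using tau1 by (simp add: inner_diff_left algebra_simps)
qed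

text \<open>The extrapolation error \<open>\<beta> (k - 1) * inner u (ys k - ys (k - 1))\<close> is absorbed by
  \<open>\<beta> k * \<tau> k * W (k - 1) (ys k)\<close>, paid for by the quadratic term of the previous potential.\<close>
lemma potential_step:
  assumes k: "2 \<le> k" "k \<le> N" and y: "y \<in> fdom f"
  shows "potential k y - potential (k - 1) y \<le> \<beta> k * gap k x y"
proof -
  define u where "u = xh (k - 1) - xs (k - 2)"
  have k1: "1 \<le> k" and km: "k - 1 - 1 = k - 2" using k by auto
  have \<beta>: "\<beta> (k - 1) = \<beta> k * lam k" using c2[OF k] .
  then have lam: "0 < lam k" using beta_pos[of "k - 1"] beta_pos[of k] by (metis zero_less_mult_pos)
  have "xt k = xs (k - 1) + lam k *\<^sub>R u" using xt_def[OF k1 k(2)] unfolding u_def .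
  then have gap: "\<beta> k * gap k x y = \<beta> k * inner (xh k - xs (k - 1)) (ys k - y)
      - \<beta> (k - 1) * inner u (ys k - y) + \<beta> k * (\<tau> k * W (k - 1) (ys k))
      + \<beta> k * (1 + \<tau> k) * W k y - \<beta> k * \<tau> k * W (k - 1) y + \<beta> k * proximity k"
    unfolding gap_eq[OF k1 k(2)] \<beta> by (simp add: inner_diff_left inner_add_left algebra_simps)
  have "lam k * inner u (ys k - ys (k - 1)) - lam k * p (k - 1) / 2 * (nX u)\<^sup>2
      \<le> \<tau> k * W (k - 1) (ys k)"
    using ys_subgrad[of "k - 1"] ys_subgrad[of k] k lam tau_nn[of k] p_pos[of "k - 1"] c3[OF k]
    by (intro bregman_fstar_scaled_ge[OF nX f_convex f_grad f_lip L])
      (auto simp: is_subgrad_def less_imp_le)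
  from mult_left_mono[OF this, of "\<beta> k"]
  have dual: "\<beta> (k - 1) * inner u (ys k - ys (k - 1)) - \<beta> (k - 1) * p (k - 1) / 2 * (nX u)\<^sup>2
      \<le> \<beta> k * (\<tau> k * W (k - 1) (ys k))"
    using beta_pos[of k] unfolding \<beta> by (simp add: algebra_simps)
  have W_prev: "\<beta> k * \<tau> k * W (k - 1) y \<le> \<beta> (k - 1) * (\<tau> (k - 1) + 1) * W (k - 1) y"
    using c1[OF k] W_nonneg[of "k - 1" y] y k by (intro mult_right_mono) auto
  have prox: "\<beta> k * (p k / 2 * (nX (xs (k - 1) - xh k))\<^sup>2) \<le> \<beta> k * proximity k"
    using proximity_ge[OF k1 k(2)] beta_pos[of k] by (intro mult_left_mono) auto
  have pot: "potential k y = \<beta> k * inner (xh k - xs (k - 1)) (ys k - y)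
      + \<beta> k * (p k / 2 * (nX (xs (k - 1) - xh k))\<^sup>2) + \<beta> k * (1 + \<tau> k) * W k y"
    unfolding potential_def by (simp add: inner_diff_left algebra_simps)
  have "nX (xs (k - 2) - xh (k - 1)) = nX u"
    unfolding u_def by (rule is_norm_minus_commute[OF nX])
  then have pot_prev: "potential (k - 1) y = \<beta> (k - 1) * inner u (ys (k - 1) - y)
      + \<beta> (k - 1) * p (k - 1) / 2 * (nX u)\<^sup>2 + \<beta> (k - 1) * (\<tau> (k - 1) + 1) * W (k - 1) y"
    unfolding potential_def km u_def by (simp add: inner_diff_left right_diff_distrib)
  have "\<beta> (k - 1) * inner u (ys k - y)
      = \<beta> (k - 1) * inner u (ys k - ys (k - 1)) + \<beta> (k - 1) * inner u (ys (k - 1) - y)"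
    by (simp add: inner_diff_right algebra_simps)
  with gap dual W_prev prox pot pot_prev show ?thesis by linarith
qed

lemma potential_le_sum_gap:
  assumes "1 \<le> N" and "y \<in> fdom f"
  shows "potential N y \<le> (\<Sum>k = 1..N. \<beta> k * gap k x y)"
  using assms potential_first potential_step by (intro sum_ge_telescoping) auto

end

theorem lemma5p2:
  fixes nX :: "'a::euclidean_space \<Rightarrow> real" and nZ :: "'b::euclidean_space \<Rightarrow> real"
    and Xs :: "'a set" and Zs :: "'b set" and Aop :: "'a \<Rightarrow> 'b" and h :: "'b \<Rightarrow> real"
    and \<mu> :: real and \<nu> :: "'a \<Rightarrow> real" and f :: "'a \<Rightarrow> real" and gf :: "'a \<Rightarrow> 'a"
    and L :: real and \<zeta> :: "'b \<Rightarrow> real"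
    and lam \<tau> \<beta> p :: "nat \<Rightarrow> real" and \<alpha> q \<eta> :: "nat \<Rightarrow> nat \<Rightarrow> real" and T :: "nat \<Rightarrow> nat"
    and N :: nat
    and xs xh xt ys gy gxo :: "nat \<Rightarrow> 'a" and zs :: "nat \<Rightarrow> 'b"
    and xin gx :: "nat \<Rightarrow> nat \<Rightarrow> 'a" and zin gz :: "nat \<Rightarrow> nat \<Rightarrow> 'b"
    and x y :: 'a
  assumes nX: "is_norm nX" and nZ: "is_norm nZ"
    and Xs: "closed Xs" "convex Xs" and Zs: "closed Zs" "convex Zs"
    and Aop: "linear Aop" and h: "convex_on Zs h" and mu: "\<mu> \<ge> 0"
    and nu: "strongly_convex_wrt Xs nX \<nu> 1"
    and f_convex: "convex_on UNIV f"
    and f_grad: "\<And>u. (f has_derivative (\<lambda>d. inner (gf u) d)) (at u)"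
    and L: "L \<ge> 0" and f_lip: "\<And>u v. dual_norm nX (gf u - gf v) \<le> L * nX (u - v)"
    and zeta: "strongly_convex_wrt Zs nZ \<zeta> 1"
    \<comment> \<open>parameters\<close>
    and lam_nn: "\<And>k. lam k \<ge> 0" and tau_nn: "\<And>k. \<tau> k \<ge> 0"
    and beta_pos: "\<And>k. \<beta> k > 0" and p_pos: "\<And>k. p k > 0"
    and q_pos: "\<And>k t. q k t > 0" and eta_pos: "\<And>k t. \<eta> k t > 0" and T_pos: "\<And>k. T k > 0"
    and tau1: "\<tau> 1 = 0"
    and c1: "\<And>k. 2 \<le> k \<Longrightarrow> k \<le> N \<Longrightarrow> \<beta> k * \<tau> k \<le> \<beta> (k - 1) * (\<tau> (k - 1) + 1)"
    and c2: "\<And>k. 2 \<le> k \<Longrightarrow> k \<le> N \<Longrightarrow> \<beta> (k - 1) = \<beta> k * lam k"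
    and c3: "\<And>k. 2 \<le> k \<Longrightarrow> k \<le> N \<Longrightarrow> L * lam k \<le> p (k - 1) * \<tau> k"
    \<comment> \<open>initialization (x_{-1} = x_0 is encoded by xs (k - 2) = xs 0 for k = 1)\<close>
    and init: "xs 0 \<in> Xs" "ys 0 \<in> fdom f" "zs 0 \<in> Zs" "xh 0 = xs 0"
    and gy0: "is_subgrad (fstar f) (fdom f) (ys 0) (gy 0)"
    \<comment> \<open>outer iterations k = 1..N\<close>
    and xt_def: "\<And>k. 1 \<le> k \<Longrightarrow> k \<le> N \<Longrightarrow>
        xt k = xs (k - 1) + lam k *\<^sub>R (xh (k - 1) - xs (k - 2))"
    and y_step: "\<And>k. 1 \<le> k \<Longrightarrow> k \<le> N \<Longrightarrow>
        is_arg_min (\<lambda>v. - inner (xt k) v + fstar f v + \<tau> k * bregman (fstar f) (gy (k - 1)) (ys (k - 1)) v)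
          (\<lambda>v. v \<in> fdom f) (ys k)"
    and gy_step: "\<And>k. 1 \<le> k \<Longrightarrow> k \<le> N \<Longrightarrow>
        gy k = (1 / (1 + \<tau> k)) *\<^sub>R (xt k + \<tau> k *\<^sub>R gy (k - 1))"
    and xin0: "\<And>k. 1 \<le> k \<Longrightarrow> k \<le> N \<Longrightarrow> xin k 0 = xs (k - 1)"
    and zin0: "\<And>k. 1 \<le> k \<Longrightarrow> k \<le> N \<Longrightarrow> zin k 0 = zs (k - 1)"
    and gxo: "\<And>k. 1 \<le> k \<Longrightarrow> k \<le> N \<Longrightarrow> is_subgrad \<nu> Xs (xs (k - 1)) (gxo k)"
    and gx: "\<And>k t. 1 \<le> k \<Longrightarrow> k \<le> N \<Longrightarrow> t < T k \<Longrightarrow> is_subgrad \<nu> Xs (xin k t) (gx k t)"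
    and gz: "\<And>k t. 1 \<le> k \<Longrightarrow> k \<le> N \<Longrightarrow> t < T k \<Longrightarrow> is_subgrad \<zeta> Zs (zin k t) (gz k t)"
    and z_step: "\<And>k t. 1 \<le> k \<Longrightarrow> k \<le> N \<Longrightarrow> 1 \<le> t \<Longrightarrow> t \<le> T k \<Longrightarrow>
        is_arg_min (\<lambda>w. h w - inner (Aop (xin k (t - 1) + \<alpha> k t *\<^sub>R (xin k (t - 1) -
              (if t = 1 then (if k = 1 then xs 0 else xin (k - 1) (T (k - 1) - 1)) else xin k (t - 2))))) w
            + q k t * bregman \<zeta> (gz k (t - 1)) (zin k (t - 1)) w)
          (\<lambda>w. w \<in> Zs) (zin k t)"
    and x_step: "\<And>k t. 1 \<le> k \<Longrightarrow> k \<le> N \<Longrightarrow> 1 \<le> t \<Longrightarrow> t \<le> T k \<Longrightarrow>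
        is_arg_min (\<lambda>u. \<mu> * \<nu> u + inner (ys k + adjoint Aop (zin k t)) u
            + \<eta> k t * bregman \<nu> (gx k (t - 1)) (xin k (t - 1)) u + p k * bregman \<nu> (gxo k) (xs (k - 1)) u)
          (\<lambda>u. u \<in> Xs) (xin k t)"
    and xs_def: "\<And>k. 1 \<le> k \<Longrightarrow> k \<le> N \<Longrightarrow> xs k = xin k (T k)"
    and zs_def: "\<And>k. 1 \<le> k \<Longrightarrow> k \<le> N \<Longrightarrow> zs k = zin k (T k)"
    and xh_def: "\<And>k. 1 \<le> k \<Longrightarrow> k \<le> N \<Longrightarrow> xh k = (1 / real (T k)) *\<^sub>R (\<Sum>t = 1..T k. xin k t)"
    and N: "N \<ge> 1"
    and x: "x \<in> Xs" and y: "y \<in> fdom f"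
  shows "(\<Sum>k = 1..N. \<beta> k * (- inner (xh k) y + inner x (ys k) + inner (ys k) (xh k - x)
            - fstar f (ys k) + fstar f y
            + p k / real (T k) * (\<Sum>t = 1..T k. bregman \<nu> (gxo k) (xs (k - 1)) (xin k t))))
         \<ge> - \<beta> N * inner (xs (N - 1) - xh N) (ys N - y) + \<beta> N * p N / 2 * (nX (xs (N - 1) - xh N))\<^sup>2
           + \<beta> N * (\<tau> N + 1) * bregman (fstar f) (gy N) (ys N) y"
proof -
  interpret pds_spp_dual_iterates nX Xs \<nu> f gf L lam \<tau> \<beta> p T N xs xh xt ys gy gxo xin
  proof (unfold_locales; (fact assms)?)
    fix k t assume "1 \<le> k" "k \<le> N" "1 \<le> t" "t \<le> T k"
    then show "xin k t \<in> Xs" using x_step unfolding is_arg_min_def by blast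
  qed
  show ?thesis
    using potential_le_sum_gap[OF N y, of x] unfolding potential_def gap_def proximity_def .
qed

end
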